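(* Let $a\ge0$ and let $\mathfrak g=\mathfrak r'_{3,a}$, the Lie algebra with basis $\{e_1,e_2,e_3\}$ and nonzero brackets $[e_1,e_2]=ae_2-e_3$, $[e_1,e_3]=e_2+ae_3$, identified with $\mathbb R^3$ via this basis. Then $$U=\left\{\begin{pmatrix}1&0&0\\0&1&0\\0&0&1/\lambda\end{pmatrix}:\lambda\ge1\right\}$$ is a set of representatives of $\mathcal{PM}(\mathfrak g)$.
   Context: $\mathcal M(\mathfrak g)$ is the set of inner products on $\mathfrak g\cong\mathbb R^3$, with $\mathrm{GL}_3(\mathbb R)$-action $g.\langle\cdot,\cdot\rangle=\langle g^{-1}\cdot,g^{-1}\cdot\rangle$; $\langle\cdot,\cdot\rangle_0$ makes $\{e_1,e_2,e_3\}$ orthonormal. Two inner products are isometric up to scaling if $\langle\cdot,\cdot\rangle_1=k\langle f\cdot,f\cdot\rangle_2$ for some $k>0$ and Lie algebra automorphism $f$; $[\langle\cdot,\cdot\rangle]$ denotes the equivalence class and $\mathcal{PM}(\mathfrak g)$ the set of classes. A subset $U\subset\mathrm{GL}_3(\mathbb R)$ is a set of representatives of $\mathcal{PM}(\mathfrak g)$ if $\mathcal{PM}(\mathfrak g)=\{[h.\langle\cdot,\cdot\rangle_0]: h\in U\}$. *)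

theory Defs
  imports "HOL-Analysis.Analysis"
begin

text \<open>The Lie algebra r'_{3,a} on real^3, coordinates w.r.t. the basis e1,e2,e3
  (components 1,2,3). Nonzero brackets [e1,e2] = a e2 - e3, [e1,e3] = e2 + a e3,
  extended bilinearly and skew-symmetrically ([e2,e3] = 0).\<close>
definition br :: "real \<Rightarrow> real^3 \<Rightarrow> real^3 \<Rightarrow> real^3" where
  "br a x y = (let p = x$1 * y$2 - x$2 * y$1; q = x$1 * y$3 - x$3 * y$1
               in vector [0, a * p + q, - p + a * q])"

definition is_ip :: "(real^3 \<Rightarrow> real^3 \<Rightarrow> real) \<Rightarrow> bool" where
  "is_ip B \<longleftrightarrow> bilinear B \<and> (\<forall>x y. B x y = B y x) \<and> (\<forall>x. x \<noteq> 0 \<longrightarrow> B x x > 0)"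

definition ips :: "(real^3 \<Rightarrow> real^3 \<Rightarrow> real) set" where
  "ips = {B. is_ip B}"

definition ip0 :: "real^3 \<Rightarrow> real^3 \<Rightarrow> real" where
  "ip0 x y = x \<bullet> y"

definition gl_act :: "real^3^3 \<Rightarrow> (real^3 \<Rightarrow> real^3 \<Rightarrow> real) \<Rightarrow> (real^3 \<Rightarrow> real^3 \<Rightarrow> real)" where
  "gl_act g B = (\<lambda>x y. B (matrix_inv g *v x) (matrix_inv g *v y))"

definition lie_aut :: "real \<Rightarrow> real^3^3 \<Rightarrow> bool" where
  "lie_aut a f \<longleftrightarrow> invertible f \<and> (\<forall>x y. f *v br a x y = br a (f *v x) (f *v y))"

definition iso_rel :: "real \<Rightarrow> ((real^3 \<Rightarrow> real^3 \<Rightarrow> real) \<times> (real^3 \<Rightarrow> real^3 \<Rightarrow> real)) set" where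
  "iso_rel a = {(B1, B2). is_ip B1 \<and> is_ip B2 \<and>
     (\<exists>k f. k > 0 \<and> lie_aut a f \<and> (\<forall>x y. B1 x y = k * B2 (f *v x) (f *v y)))}"

definition PM :: "real \<Rightarrow> (real^3 \<Rightarrow> real^3 \<Rightarrow> real) set set" where
  "PM a = ips // iso_rel a"

definition is_reps :: "real \<Rightarrow> (real^3^3) set \<Rightarrow> bool" where
  "is_reps a U \<longleftrightarrow> (\<forall>h\<in>U. invertible h) \<and>
     PM a = {iso_rel a `` {gl_act h ip0} | h. h \<in> U}"

end

theory Submission
  imports Defs
begin

text \<open>Up to a Lie algebra automorphism and a positive scale, every inner product is
  x1 y1 + x2 y2 + l^2 x3 y3 with l \<ge> 1, the pullback of the standard one under diag(1, 1, 1/l).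
  The automorphisms include every map sending e1 into e1 + span(e2, e3) and acting on the ideal
  span(e2, e3) by a rotation-scaling. A rotation diagonalizes the inner product on the ideal,
  ordered so that e3 carries the larger value; sending e1 to the orthogonal complement of the
  ideal and rescaling gives the normal form.\<close>

lemma matrix_inv:
  fixes A :: "'a::semiring_1^'n^'m"
  assumes "invertible A"
  shows matrix_inv_right: "A ** matrix_inv A = mat 1"
    and matrix_inv_left: "matrix_inv A ** A = mat 1"
proof -
  have "\<exists>A'. A ** A' = mat 1 \<and> A' ** A = mat 1"
    using assms unfolding invertible_def by blast
  from someI_ex[OF this] show "A ** matrix_inv A = mat 1" "matrix_inv A ** A = mat 1"
    unfolding matrix_inv_def by auto
qed

lemma matrix_inv_unique:
  fixes A B :: "'a::semiring_1^'n^'n"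
  assumes "A ** B = mat 1" "B ** A = mat 1"
  shows "matrix_inv A = B"
proof -
  have "invertible A" using assms unfolding invertible_def by blast
  have "matrix_inv A = (B ** A) ** matrix_inv A" using assms by (simp add: matrix_mul_lid)
  also have "\<dots> = B" using matrix_inv_right[OF \<open>invertible A\<close>]
    by (metis matrix_mul_assoc matrix_mul_rid)
  finally show ?thesis .
qed

lemma invertible_matrix_inv:
  fixes A :: "'a::semiring_1^'n^'m"
  assumes "invertible A"
  shows "invertible (matrix_inv A)"
  using matrix_inv[OF assms] unfolding invertible_def by blast

lemma matrix_inv_vector_mul:
  fixes A :: "'a::comm_semiring_1^'n^'n"
  assumes "invertible A"
  shows "A *v (matrix_inv A *v x) = x" "matrix_inv A *v (A *v x) = x"
  using matrix_inv[OF assms] by (simp_all add: matrix_vector_mul_assoc)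

lemma is_ip_gl_act_ip0:
  assumes "invertible h"
  shows "is_ip (gl_act h ip0)"
proof -
  let ?M = "matrix_inv h"
  have "bilinear (gl_act h ip0)"
    unfolding bilinear_def gl_act_def ip0_def
    by (auto intro!: linearI simp: matrix_vector_right_distrib inner_add_left inner_add_right
        matrix_vector_mult_scaleR)
  moreover have "gl_act h ip0 x x > 0" if "x \<noteq> 0" for x
  proof -
    have "inj ((*v) ?M)"
      by (rule inj_matrix_vector_mult[OF invertible_matrix_inv[OF assms]])
    then have "?M *v x \<noteq> 0" using that by (metis matrix_vector_mult_0_right injD)
    then show ?thesis unfolding gl_act_def ip0_def by simp
  qed
  ultimately show ?thesis unfolding is_ip_def gl_act_def ip0_def by (auto simp: inner_commute)
qed

lemma lie_aut_mat_1: "lie_aut a (mat 1)"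
  unfolding lie_aut_def invertible_def by (simp add: matrix_mul_lid)

lemma lie_aut_mult:
  assumes "lie_aut a f" "lie_aut a g"
  shows "lie_aut a (f ** g)"
  using assms unfolding lie_aut_def
  by (simp add: invertible_mult matrix_vector_mul_assoc[symmetric])

lemma lie_aut_matrix_inv:
  assumes "lie_aut a f"
  shows "lie_aut a (matrix_inv f)"
proof -
  have f: "invertible f" using assms unfolding lie_aut_def by blast
  have "matrix_inv f *v br a x y = br a (matrix_inv f *v x) (matrix_inv f *v y)" for x y
    using assms matrix_inv_vector_mul[OF f] unfolding lie_aut_def by metis
  with invertible_matrix_inv[OF f] show ?thesis unfolding lie_aut_def by blast
qed

lemma equiv_iso_rel: "equiv ips (iso_rel a)"
proof (rule equivI)
  show "refl_on ips (iso_rel a)"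
    unfolding refl_on_def iso_rel_def ips_def
    using lie_aut_mat_1 by (auto intro!: exI[of _ 1] exI[of _ "mat 1"])
  show "sym (iso_rel a)"
  proof (rule symI)
    fix B1 B2 assume "(B1, B2) \<in> iso_rel a"
    then obtain k f where "is_ip B1" "is_ip B2" "k > 0" "lie_aut a f"
        and B1: "\<And>x y. B1 x y = k * B2 (f *v x) (f *v y)"
      unfolding iso_rel_def by blast
    moreover have "invertible f" using \<open>lie_aut a f\<close> unfolding lie_aut_def by blast
    ultimately have "B2 x y = (1/k) * B1 (matrix_inv f *v x) (matrix_inv f *v y)" for x y
      by (simp add: matrix_inv_vector_mul)
    then show "(B2, B1) \<in> iso_rel a"
      unfolding iso_rel_def
      using \<open>is_ip B1\<close> \<open>is_ip B2\<close> \<open>k > 0\<close> lie_aut_matrix_inv[OF \<open>lie_aut a f\<close>]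
      by (auto intro!: exI[of _ "1/k"])
  qed
  show "trans (iso_rel a)"
  proof (rule transI)
    fix B1 B2 B3 assume "(B1, B2) \<in> iso_rel a" "(B2, B3) \<in> iso_rel a"
    then obtain k f k' g where "is_ip B1" "is_ip B3" "k > 0" "k' > 0" "lie_aut a f" "lie_aut a g"
      and "\<And>x y. B1 x y = k * B2 (f *v x) (f *v y)" "\<And>x y. B2 x y = k' * B3 (g *v x) (g *v y)"
      unfolding iso_rel_def by blast
    then show "(B1, B3) \<in> iso_rel a"
      unfolding iso_rel_def using lie_aut_mult[of a g f]
      by (auto simp: matrix_vector_mul_assoc intro!: exI[of _ "k * k'"] exI[of _ "g ** f"])
  qed
qed (auto simp: iso_rel_def ips_def)

lemma is_repsI:
  assumes invertible: "\<And>h. h \<in> U \<Longrightarrow> invertible h"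
    and represented: "\<And>B. is_ip B \<Longrightarrow> \<exists>h\<in>U. (gl_act h ip0, B) \<in> iso_rel a"
  shows "is_reps a U"
proof -
  have "PM a = {iso_rel a `` {gl_act h ip0} | h. h \<in> U}"
  proof (intro equalityI subsetI)
    fix X assume "X \<in> PM a"
    then obtain B where "is_ip B" and X: "X = iso_rel a `` {B}"
      unfolding PM_def quotient_def ips_def by blast
    then obtain h where "h \<in> U" "(gl_act h ip0, B) \<in> iso_rel a" using represented by blast
    then have "X = iso_rel a `` {gl_act h ip0}"
      using X equiv_class_eq[OF equiv_iso_rel] by metis
    with \<open>h \<in> U\<close> show "X \<in> {iso_rel a `` {gl_act h ip0} | h. h \<in> U}" by blast
  next
    fix X assume "X \<in> {iso_rel a `` {gl_act h ip0} | h. h \<in> U}"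
    then obtain h where "h \<in> U" "X = iso_rel a `` {gl_act h ip0}" by blast
    moreover have "gl_act h ip0 \<in> ips"
      using is_ip_gl_act_ip0[OF invertible[OF \<open>h \<in> U\<close>]] unfolding ips_def by simp
    ultimately show "X \<in> PM a" unfolding PM_def by (simp add: quotientI)
  qed
  with invertible show ?thesis unfolding is_reps_def by blast
qed

definition columns3 :: "real^3 \<Rightarrow> real^3 \<Rightarrow> real^3 \<Rightarrow> real^3^3" where
  "columns3 z u w = (\<chi> i j. if j = 1 then z$i else if j = 2 then u$i else w$i)"

lemma columns3_vector_mul: "columns3 z u w *v x = x$1 *\<^sub>R z + x$2 *\<^sub>R u + x$3 *\<^sub>R w"
  by (simp add: vec_eq_iff matrix_vector_mult_def columns3_def sum_3 algebra_simps)

definition plane_vec :: "real \<Rightarrow> real \<Rightarrow> real^3" where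
  "plane_vec p q = vector [0, p, q]"

lemma plane_vec_nth [simp]:
  "plane_vec p q $ 1 = 0" "plane_vec p q $ 2 = p" "plane_vec p q $ 3 = q"
  by (simp_all add: plane_vec_def)

lemma plane_vec_eq_0_iff: "plane_vec p q = 0 \<longleftrightarrow> p = 0 \<and> q = 0"
  by (auto simp: vec_eq_iff forall_3)

lemma scaleR_plane_vec: "r *\<^sub>R plane_vec p q = plane_vec (r * p) (r * q)"
  by (simp add: vec_eq_iff forall_3)

text \<open>ad(e1) acts on the abelian ideal spanned by e2, e3 as multiplication by the complex
  number a - i, so every invertible complex multiplication on that ideal, together with any
  image of e1 in e1 + (ideal), is an automorphism.\<close>
lemma lie_aut_columns3:
  assumes "z$1 = 1" "p\<^sup>2 + q\<^sup>2 > 0"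
  shows "lie_aut a (columns3 z (plane_vec p q) (plane_vec (-q) p))"
proof -
  let ?f = "columns3 z (plane_vec p q) (plane_vec (-q) p)"
  have "det ?f = p\<^sup>2 + q\<^sup>2"
    using assms by (simp add: det_3 columns3_def power2_eq_square)
  with assms have "invertible ?f" by (metis invertible_det_nz less_numeral_extra(3))
  moreover have "?f *v br a x y = br a (?f *v x) (?f *v y)" for x y
    using assms by (simp add: columns3_vector_mul br_def vec_eq_iff forall_3 algebra_simps)
  ultimately show ?thesis unfolding lie_aut_def by blast
qed

lemma bilinear_expand3:
  assumes "bilinear B"
  shows "B (x1 *\<^sub>R p + x2 *\<^sub>R q + x3 *\<^sub>R s) (y1 *\<^sub>R p + y2 *\<^sub>R q + y3 *\<^sub>R s) =
    x1*y1*B p p + x1*y2*B p q + x1*y3*B p s + x2*y1*B q p + x2*y2*B q q + x2*y3*B q s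
    + x3*y1*B s p + x3*y2*B s q + x3*y3*B s s"
  using assms by (simp add: bilinear_ladd bilinear_radd bilinear_lmul bilinear_rmul algebra_simps)

lemma bilinear_plane_vec:
  assumes "bilinear B"
  shows "B (plane_vec p q) (plane_vec p' q') =
    p*p'*B (axis 2 1) (axis 2 1) + p*q'*B (axis 2 1) (axis 3 1)
    + q*p'*B (axis 3 1) (axis 2 1) + q*q'*B (axis 3 1) (axis 3 1)"
proof -
  have "plane_vec p q = p *\<^sub>R axis 2 1 + q *\<^sub>R axis 3 1" for p q
    by (simp add: vec_eq_iff forall_3 axis_def)
  then show ?thesis
    using assms by (simp add: bilinear_ladd bilinear_radd bilinear_lmul bilinear_rmul algebra_simps)
qed

text \<open>The witness satisfies (\<alpha> + i\<beta>)^2 = 2(d + S)(d - 2ic) with S = |d - 2ic|, i.e. it is a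
  square root of d - 2ic up to a positive factor; the degenerate case is d - 2ic \<le> 0 real.\<close>
lemma exists_half_angle_vector:
  fixes c d :: real
  shows "\<exists>\<alpha> \<beta>. \<alpha>\<^sup>2 + \<beta>\<^sup>2 > 0 \<and> \<alpha>*\<beta>*d + (\<alpha>\<^sup>2 - \<beta>\<^sup>2)*c = 0 \<and> (\<alpha>\<^sup>2 - \<beta>\<^sup>2)*d - 4*\<alpha>*\<beta>*c \<ge> 0"
proof (cases "c = 0 \<and> d \<le> 0")
  case True
  then show ?thesis by (intro exI[of _ 0] exI[of _ 1]) auto
next
  case False
  define S where "S = sqrt (d\<^sup>2 + 4*c\<^sup>2)"
  have S2: "S\<^sup>2 = d\<^sup>2 + 4*c\<^sup>2" and "S \<ge> \<bar>d\<bar>"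
    unfolding S_def by (simp_all add: real_le_rsqrt)
  have "d + S \<noteq> 0 \<or> c \<noteq> 0"
  proof (rule ccontr)
    assume "\<not> ?thesis"
    then have "c = 0" "S = - d" by auto
    with False \<open>S \<ge> \<bar>d\<bar>\<close> show False by auto
  qed
  then have "(d + S)\<^sup>2 > 0 \<or> (-2*c)\<^sup>2 > 0" by simp
  then have "(d + S)\<^sup>2 + (-2*c)\<^sup>2 > 0" by (metis add_pos_nonneg add_nonneg_pos zero_le_power2)
  moreover have "(d + S)*(-2*c)*d + ((d + S)\<^sup>2 - (-2*c)\<^sup>2)*c = 0"
    using S2 by (simp add: algebra_simps power2_eq_square)
  moreover have "((d + S)\<^sup>2 - (-2*c)\<^sup>2)*d - 4*(d + S)*(-2*c)*c = 2*(d + S)*S\<^sup>2"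
    using S2 by (simp add: algebra_simps power2_eq_square)
  moreover have "2*(d + S)*S\<^sup>2 \<ge> 0" using \<open>S \<ge> \<bar>d\<bar>\<close> by simp
  ultimately show ?thesis by (intro exI[of _ "d + S"] exI[of _ "-2*c"]) simp
qed

lemma exists_orthogonal_plane_frame:
  fixes B :: "real^3 \<Rightarrow> real^3 \<Rightarrow> real"
  assumes "bilinear B" and sym: "\<And>x y. B x y = B y x"
  shows "\<exists>p q. p\<^sup>2 + q\<^sup>2 > 0 \<and> B (plane_vec p q) (plane_vec (-q) p) = 0 \<and>
    B (plane_vec p q) (plane_vec p q) \<le> B (plane_vec (-q) p) (plane_vec (-q) p)"
proof -
  let ?b = "\<lambda>i j. B (axis i 1) (axis j 1)"
  obtain p q where "p\<^sup>2 + q\<^sup>2 > 0" and "p*q*(?b 3 3 - ?b 2 2) + (p\<^sup>2 - q\<^sup>2)*?b 2 3 = 0"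
    and "(p\<^sup>2 - q\<^sup>2)*(?b 3 3 - ?b 2 2) - 4*p*q*?b 2 3 \<ge> 0"
    using exists_half_angle_vector by blast
  moreover have "?b 3 2 = ?b 2 3" using sym by simp
  ultimately show ?thesis
    unfolding bilinear_plane_vec[OF \<open>bilinear B\<close>]
    by (intro exI[of _ p] exI[of _ q]) (simp add: algebra_simps power2_eq_square)
qed

lemma exists_orthogonal_complement_vector:
  fixes B :: "real^3 \<Rightarrow> real^3 \<Rightarrow> real"
  assumes "bilinear B" "B u u > 0" "B w w > 0" "B u w = 0" "B w u = 0" "u$1 = 0" "w$1 = 0"
  shows "\<exists>z. z$1 = 1 \<and> B z u = 0 \<and> B z w = 0"
proof -
  define z where "z = axis 1 1 - (B (axis 1 1) u / B u u) *\<^sub>R u - (B (axis 1 1) w / B w w) *\<^sub>R w"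
  have "B z u = 0" "B z w = 0"
    using assms unfolding z_def by (simp_all add: bilinear_lsub bilinear_lmul)
  moreover have "z$1 = 1" using assms unfolding z_def by (simp add: axis_def)
  ultimately show ?thesis by blast
qed

lemma bilinear_columns3_orthogonal:
  fixes B :: "real^3 \<Rightarrow> real^3 \<Rightarrow> real"
  assumes "bilinear B" and sym: "\<And>x y. B x y = B y x"
    and "B z u = 0" "B z w = 0" "B u w = 0"
  shows "B (columns3 z u w *v x) (columns3 z u w *v y) =
    x$1*y$1*B z z + x$2*y$2*B u u + x$3*y$3*B w w"
  using assms(3-5) sym[of u z] sym[of w z] sym[of w u]
  unfolding columns3_vector_mul bilinear_expand3[OF \<open>bilinear B\<close>] by simp

definition rep_matrix :: "real \<Rightarrow> real^3^3" where
  "rep_matrix l = vector [vector [1, 0, 0], vector [0, 1, 0], vector [0, 0, 1 / l]]"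

lemma rep_matrix_mult_inverse:
  assumes "l \<noteq> 0"
  shows "rep_matrix l ** rep_matrix (1 / l) = mat 1"
  using assms by (auto simp: rep_matrix_def vec_eq_iff forall_3 matrix_matrix_mult_def sum_3 mat_def)

lemma invertible_rep_matrix: "l \<noteq> 0 \<Longrightarrow> invertible (rep_matrix l)"
  using rep_matrix_mult_inverse invertible_right_inverse by blast

lemma gl_act_rep_matrix_ip0:
  assumes "l \<noteq> 0"
  shows "gl_act (rep_matrix l) ip0 x y = x$1*y$1 + x$2*y$2 + l\<^sup>2*(x$3*y$3)"
proof -
  have "matrix_inv (rep_matrix l) = rep_matrix (1 / l)"
    using assms rep_matrix_mult_inverse[of l] rep_matrix_mult_inverse[of "1 / l"]
    by (intro matrix_inv_unique) simp_all
  then show ?thesis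
    by (simp add: gl_act_def ip0_def inner_vec_def sum_3 matrix_vector_mult_def rep_matrix_def
        power2_eq_square)
qed

lemma exists_iso_rel_rep_matrix:
  assumes "is_ip B"
  shows "\<exists>l\<ge>1. (gl_act (rep_matrix l) ip0, B) \<in> iso_rel a"
proof -
  have bil: "bilinear B" and sym: "\<And>x y. B x y = B y x" and pos: "\<And>x. x \<noteq> 0 \<Longrightarrow> B x x > 0"
    using assms unfolding is_ip_def by auto
  obtain p q where pq: "p\<^sup>2 + q\<^sup>2 > 0" and "B (plane_vec p q) (plane_vec (-q) p) = 0"
    and "B (plane_vec p q) (plane_vec p q) \<le> B (plane_vec (-q) p) (plane_vec (-q) p)"
    using exists_orthogonal_plane_frame[OF bil sym] by blast
  moreover define u w where "u = plane_vec p q" and "w = plane_vec (-q) p"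
  ultimately have uw: "B u w = 0" "B w u = 0" and "B u u \<le> B w w" using sym[of w u] by auto
  have "u \<noteq> 0" using pq unfolding u_def plane_vec_eq_0_iff by auto
  then have "B u u > 0" using pos by blast
  with \<open>B u u \<le> B w w\<close> have "B w w > 0" by linarith
  obtain z where "z$1 = 1" and zuw: "B z u = 0" "B z w = 0"
    using exists_orthogonal_complement_vector[OF bil \<open>B u u > 0\<close> \<open>B w w > 0\<close> uw]
    unfolding u_def w_def by auto
  then have "B z z > 0" using pos[of z] by (metis zero_index zero_neq_one)
  define r where "r = sqrt (B z z / B u u)"
  define l where "l = sqrt (B w w / B u u)"
  define f where "f = columns3 z (r *\<^sub>R u) (r *\<^sub>R w)"
  have "r > 0" "r\<^sup>2 * B u u = B z z" "l \<ge> 1" "l\<^sup>2 * B u u = B w w"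
    using \<open>B u u > 0\<close> \<open>B z z > 0\<close> \<open>B u u \<le> B w w\<close> unfolding r_def l_def by simp_all
  have "lie_aut a f"
  proof -
    have "(r * p)\<^sup>2 + (r * q)\<^sup>2 > 0" using pq \<open>r > 0\<close> by (simp add: power_mult_distrib flip: distrib_left)
    with \<open>z$1 = 1\<close> show ?thesis
      unfolding f_def u_def w_def scaleR_plane_vec by (simp add: lie_aut_columns3)
  qed
  have "r\<^sup>2 * B w w = l\<^sup>2 * B z z"
    using \<open>r\<^sup>2 * B u u = B z z\<close> \<open>l\<^sup>2 * B u u = B w w\<close> by (metis mult.left_commute)
  have "B (f *v x) (f *v y) = B z z * (x$1*y$1 + x$2*y$2 + l\<^sup>2*(x$3*y$3))" for x y
  proof -
    have "B (f *v x) (f *v y) =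
        x$1*y$1*B z z + x$2*y$2*B (r *\<^sub>R u) (r *\<^sub>R u) + x$3*y$3*B (r *\<^sub>R w) (r *\<^sub>R w)"
      unfolding f_def
      by (rule bilinear_columns3_orthogonal[OF bil sym]) (simp_all add: zuw uw bil bilinear_lmul bilinear_rmul)
    also have "\<dots> = x$1*y$1*B z z + x$2*y$2*(r\<^sup>2 * B u u) + x$3*y$3*(r\<^sup>2 * B w w)"
      by (simp add: bil bilinear_lmul bilinear_rmul power2_eq_square)
    also have "\<dots> = B z z * (x$1*y$1 + x$2*y$2 + l\<^sup>2*(x$3*y$3))"
      unfolding \<open>r\<^sup>2 * B u u = B z z\<close> \<open>r\<^sup>2 * B w w = l\<^sup>2 * B z z\<close> by (simp add: algebra_simps)
    finally show ?thesis .
  qed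
  then have "gl_act (rep_matrix l) ip0 x y = (1 / B z z) * B (f *v x) (f *v y)" for x y
    using \<open>l \<ge> 1\<close> \<open>B z z > 0\<close> by (simp add: gl_act_rep_matrix_ip0)
  moreover have "is_ip (gl_act (rep_matrix l) ip0)"
    using \<open>l \<ge> 1\<close> by (simp add: is_ip_gl_act_ip0 invertible_rep_matrix)
  ultimately show ?thesis
    using \<open>l \<ge> 1\<close> \<open>B z z > 0\<close> \<open>lie_aut a f\<close> assms unfolding iso_rel_def
    by (intro exI[of _ l]) (auto intro!: exI[of _ "1 / B z z"] exI[of _ f])
qed

theorem proposition3p10:
  fixes a :: real
  assumes "a \<ge> 0"
  shows "is_reps a {vector [vector [1, 0, 0], vector [0, 1, 0], vector [0, 0, 1 / l]] | l::real. l \<ge> 1}"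
proof -
  have "{vector [vector [1, 0, 0], vector [0, 1, 0], vector [0, 0, 1 / l]] | l::real. l \<ge> 1} =
      {rep_matrix l | l. l \<ge> 1}"
    unfolding rep_matrix_def ..
  moreover have "is_reps a {rep_matrix l | l. l \<ge> 1}"
  proof (rule is_repsI)
    show "invertible h" if "h \<in> {rep_matrix l | l. l \<ge> 1}" for h
      using that invertible_rep_matrix by force
    show "\<exists>h\<in>{rep_matrix l | l. l \<ge> 1}. (gl_act h ip0, B) \<in> iso_rel a" if "is_ip B" for B
      using exists_iso_rel_rep_matrix[OF that] by blast
  qed
  ultimately show ?thesis by simp
qed

end
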